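(* Let $B$ be an abelian group equipped with an infinite family of group homomorphisms $r_v\colon B\to B_v$ (indexed by primes $v$ of a number field $F$) into finite abelian groups $B_v$, satisfying Assumptions (A1) and (A2) described in the context. Let $P,Q\in B$ be points of infinite order. Then the following are equivalent: (i) for all but finitely many $v$ there exist coprime integers $x,y$ and a point $T\in B_{\mathrm{tors}}$ such that $r_v(x^2P+y^2Q)=r_v(T)$; (ii) there exist coprime integers $x,y$ and a point $T\in B_{\mathrm{tors}}$ such that $x^2P+y^2Q=T$.
   Context: Setting: $F$ is a number field, $B$ an abelian group, and $r_v\colon B\to B_v$ an infinite family of group homomorphisms indexed by primes $v$ of $F$, with each $B_v$ a finite abelian group. $B_{\mathrm{tors}}$ denotes the torsion subgroup of $B$. For $P\in B$, $\mathrm{ord}_v P$ denotes the order of $r_v(P)$ in $B_v$. For a prime $l$ and positive integer $k$, $l^k\parallel n$ means $l^k\mid n$ and $l^{k+1}\nmid n$. Assumption (A1): for every prime number $l$, every sequence $(k_1,\dots,k_m)$ of nonnegative integers, and every points $P_1,\dots,P_m\in B$ linearly independent over $\mathbb{Z}$, there is a set of primes $v$ of $F$ of positive density such that for each $i$, $l^{k_i}\parallel \mathrm{ord}_v P_i$ if $k_i>0$ and $l\nmid \mathrm{ord}_v P_i$ if $k_i=0$. Assumption (A2): for all but finitely many $v$ the restriction of $r_v$ to $B_{\mathrm{tors}}$ is injective. (Examples: $S$-unit groups of a number field, Mordell–Weil groups $A(F)$ of abelian varieties with $\mathrm{End}_{\bar F}(A)=\mathbb{Z}$, odd $K$-groups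 $K_{2n+1}(F)$, $n>0$, with reduction maps.) *)

theory Defs
  imports Complex_Main "HOL-Algebra.Multiplicative_Group" "HOL-Computational_Algebra.Primes"
begin

text \<open>Groups are HOL-Algebra structures written multiplicatively:
  the paper's x P is written P [^] x, and P + Q is P \<otimes> Q.\<close>

definition torsion :: "('a, 'm) monoid_scheme \<Rightarrow> 'a set" where
  "torsion G = {g \<in> carrier G. \<exists>n::nat. n > 0 \<and> g [^]\<^bsub>G\<^esub> n = \<one>\<^bsub>G\<^esub>}"

definition lin_indep_Z :: "('a, 'm) monoid_scheme \<Rightarrow> (nat \<Rightarrow> 'a) \<Rightarrow> nat \<Rightarrow> bool" where
  "lin_indep_Z G P m \<longleftrightarrow> (\<forall>i<m. P i \<in> carrier G) \<and>
     (\<forall>a::nat \<Rightarrow> int. finprod G (\<lambda>i. P i [^]\<^bsub>G\<^esub> a i) {..<m} = \<one>\<^bsub>G\<^esub>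
        \<longrightarrow> (\<forall>i<m. a i = 0))"

definition exact_pow_cond :: "nat \<Rightarrow> nat \<Rightarrow> nat \<Rightarrow> bool" where
  "exact_pow_cond l k n \<longleftrightarrow>
     (if k > 0 then l ^ k dvd n \<and> \<not> l ^ (k + 1) dvd n else \<not> l dvd n)"

text \<open>Natural density of a set S of primes (primes ordered by their absolute norm Nv),
  existing and positive.\<close>
definition has_pos_density :: "('v \<Rightarrow> nat) \<Rightarrow> 'v set \<Rightarrow> bool" where
  "has_pos_density Nv S \<longleftrightarrow> (\<exists>d::real. d > 0 \<and>
     ((\<lambda>x::nat. real (card {v \<in> S. Nv v \<le> x}) / real (card {v. Nv v \<le> x})) \<longlonglongrightarrow> d))"

definition assumption_A1 ::
  "('b, 'm) monoid_scheme \<Rightarrow> ('v \<Rightarrow> ('c, 'n) monoid_scheme) \<Rightarrow> ('v \<Rightarrow> 'b \<Rightarrow> 'c) \<Rightarrow> ('v \<Rightarrow> nat) \<Rightarrow> bool"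
  where
  "assumption_A1 B Bv r Nv \<longleftrightarrow>
     (\<forall>(l::nat) (m::nat) (k::nat \<Rightarrow> nat) (P::nat \<Rightarrow> 'b).
        prime l \<longrightarrow> lin_indep_Z B P m \<longrightarrow>
        (\<exists>S. has_pos_density Nv S \<and>
           (\<forall>v\<in>S. \<forall>i<m. exact_pow_cond l (k i) (group.ord (Bv v) (r v (P i))))))"

definition assumption_A2 ::
  "('b, 'm) monoid_scheme \<Rightarrow> ('v \<Rightarrow> 'b \<Rightarrow> 'c) \<Rightarrow> bool" where
  "assumption_A2 B r \<longleftrightarrow> finite {v. \<not> inj_on (r v) (torsion B)}"

end

theory Submission
  imports Defs "HOL-Computational_Algebra.Nth_Powers"
begin

text \<open>
  Written additively: if \<open>u\<^sup>2 P + w\<^sup>2 Q\<close> is torsion the local condition holds everywhere, so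
  the content is the converse. Let \<open>N\<close> kill \<open>B\<^sub>t\<^sub>o\<^sub>r\<^sub>s\<close> (by (A2) it embeds into a finite \<open>B\<^sub>v\<close>).
  For almost all \<open>v\<close> we get \<open>N x\<^sup>2 r\<^sub>v P + N y\<^sup>2 r\<^sub>v Q = 0\<close> with \<open>x, y\<close> coprime. If \<open>P, Q\<close>
  were independent, (A1) would give such a \<open>v\<close> with \<open>2\<^sup>e\<^sup>+\<^sup>2 \<parallel> ord r\<^sub>v P\<close> and
  \<open>2\<^sup>e\<^sup>+\<^sup>1 \<parallel> ord r\<^sub>v Q\<close>, where \<open>2\<^sup>e \<parallel> N\<close>, and the relation cannot hold there. So
  \<open>a P + b Q = 0\<close> with \<open>a, b \<noteq> 0\<close>; choosing \<open>v\<close> by (A1) with \<open>l\<^sup>K\<close> dividing the order of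
  \<open>r\<^sub>v P\<close> and eliminating \<open>Q\<close> shows that \<open>N (b x\<^sup>2 - a y\<^sup>2) \<equiv> 0 (mod l\<^sup>K)\<close> is solvable
  with coprime \<open>x, y\<close> for every prime power. This forces \<open>(a, b) = c (u\<^sup>2, w\<^sup>2)\<close> with
  \<open>u, w\<close> coprime: after removing \<open>gcd a b\<close> all valuations are even, and solvability
  modulo high powers of 2 excludes opposite signs. Finally \<open>c (u\<^sup>2 P + w\<^sup>2 Q) = 0\<close>.
\<close>

section \<open>Integers that are locally a ratio of squares\<close>

lemma prime_power_dvd_mult_cancel:
  fixes l t z :: int
  assumes "prime l" "t \<noteq> 0" "l ^ (k + multiplicity l t) dvd t * z"
  shows "l ^ k dvd z"
proof -
  obtain s where t: "t = l ^ multiplicity l t * s" "\<not> l dvd s"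
    using multiplicity_decompose'[of t l] assms(1,2) not_prime_unit by blast
  have "l ^ multiplicity l t * l ^ k dvd l ^ multiplicity l t * (s * z)"
    using assms(3) by (subst (asm) t(1)) (simp add: power_add mult_ac)
  then have "l ^ k dvd s * z"
    using assms(1) by (simp add: prime_gt_0_int)
  moreover have "coprime (l ^ k) s"
    using t(2) assms(1) by (simp add: prime_imp_coprime)
  ultimately show ?thesis
    by (simp add: coprime_dvd_mult_right_iff)
qed

lemma multiplicity_eq_if_dvd_diff:
  fixes l u w :: int
  assumes "prime l" "w \<noteq> 0" "l ^ (multiplicity l w + 1) dvd u - w"
  shows "multiplicity l u = multiplicity l w"
proof -
  have not_unit: "\<not> is_unit l" using assms(1) not_prime_unit by blast
  have w_not: "\<not> l ^ (multiplicity l w + 1) dvd w"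
    by (simp only: power_dvd_iff_le_multiplicity[OF assms(2) not_unit])
  have "l ^ multiplicity l w dvd u - w"
    using assms(3) by (rule dvd_trans[rotated]) (simp add: le_imp_power_dvd)
  then have u_dvd: "l ^ multiplicity l w dvd u"
    using dvd_add[OF _ multiplicity_dvd[of l w]] by force
  have u_not: "\<not> l ^ (multiplicity l w + 1) dvd u"
  proof
    assume "l ^ (multiplicity l w + 1) dvd u"
    then have "l ^ (multiplicity l w + 1) dvd u - (u - w)" using assms(3) by (rule dvd_diff)
    with w_not show False by simp
  qed
  then have "u \<noteq> 0" by auto
  then have "multiplicity l w \<le> multiplicity l u" "\<not> multiplicity l w + 1 \<le> multiplicity l u"
    using u_dvd u_not power_dvd_iff_le_multiplicity[OF \<open>u \<noteq> 0\<close> not_unit] by blast+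
  then show ?thesis by simp
qed

lemma even_multiplicity_if_dvd_diff_squares:
  fixes l a b x y :: int
  assumes l: "prime l" and "a \<noteq> 0" "coprime a b" "coprime x y"
    and dvd: "l ^ (multiplicity l a + 1) dvd b * x^2 - a * y^2"
  shows "even (multiplicity l a)"
proof (cases "l dvd a")
  case False
  then show ?thesis by (simp add: not_dvd_imp_multiplicity_0)
next
  case True
  have pe: "prime_elem l" using l by (rule prime_imp_prime_elem)
  have lb: "\<not> l dvd b"
    using coprime_common_divisor[OF assms(3) True] l not_prime_unit by blast
  have ly: "\<not> l dvd y"
  proof
    assume "l dvd y"
    then have lx: "\<not> l dvd x" using coprime_common_divisor[OF assms(4)] l not_prime_unit by blast
    have "l dvd b * x^2 - a * y^2" using dvd by (rule dvd_trans[rotated]) simp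
    moreover have "l dvd a * y^2" using True by simp
    ultimately have "l dvd (b * x^2 - a * y^2) + a * y^2" by (rule dvd_add)
    with lx show False using lb l by (simp add: prime_dvd_mult_iff prime_dvd_power_iff)
  qed
  then have "y \<noteq> 0" by auto
  then have "multiplicity l (a * y^2) = multiplicity l a"
    using ly assms(2) pe by (simp add: prime_elem_multiplicity_mult_distrib
        prime_elem_multiplicity_power_distrib multiplicity_eq_zero_iff)
  then have bx: "multiplicity l (b * x^2) = multiplicity l a"
    using multiplicity_eq_if_dvd_diff[OF l, of "a * y^2" "b * x^2"] dvd assms(2) \<open>y \<noteq> 0\<close> by simp
  moreover have "multiplicity l a > 0"
    using True assms(2) l not_prime_unit multiplicity_gt_zero_iff by blast
  ultimately have "b * x^2 \<noteq> 0" by auto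
  then have "multiplicity l (b * x^2) = 2 * multiplicity l x"
    using lb pe by (simp add: prime_elem_multiplicity_mult_distrib
        prime_elem_multiplicity_power_distrib multiplicity_eq_zero_iff)
  with bx show ?thesis by (metis dvd_triv_left)
qed

lemma four_not_dvd_odd_square_add_square:
  fixes a c :: int
  assumes "odd a"
  shows "\<not> 4 dvd a^2 + c^2"
proof -
  obtain m where a: "a = 2 * m + 1" using assms oddE by blast
  show ?thesis
  proof (cases "even c")
    case True
    then obtain k where "c = 2 * k" by blast
    then have "a^2 + c^2 = 4 * (m^2 + m + k^2) + 1" using a by (simp add: power2_eq_square algebra_simps)
    then show ?thesis by (simp add: dvd_add_right_iff)
  next
    case False
    then obtain k where "c = 2 * k + 1" using oddE by blast
    then have "a^2 + c^2 = 4 * (m^2 + m + k^2 + k) + 2" using a by (simp add: power2_eq_square algebra_simps)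
    then show ?thesis by (simp add: dvd_add_right_iff)
  qed
qed

lemma not_dvd_sum_squares_multiplicity_2:
  fixes w x c :: int
  assumes "w \<noteq> 0" "odd x"
  shows "\<not> 2 ^ (2 * multiplicity 2 w + 2) dvd (w * x)^2 + c^2"
proof
  define j where "j = multiplicity 2 w"
  obtain w' where w: "w = 2 ^ j * w'" "odd w'"
    using multiplicity_decompose'[of w 2] assms(1) unfolding j_def by auto
  assume dvd: "2 ^ (2 * j + 2) dvd (w * x)^2 + c^2"
  have "((2::int) ^ j)^2 dvd 2 ^ (2 * j + 2)"
    by (simp add: power_mult[symmetric] mult.commute le_imp_power_dvd)
  then have "(2 ^ j)^2 dvd (w * x)^2 + c^2" using dvd by (rule dvd_trans)
  moreover have "(2 ^ j)^2 dvd (w * x)^2" using w(1) by (simp add: power_mult_distrib)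
  ultimately have "(2 ^ j)^2 dvd c^2" by (simp add: dvd_add_right_iff)
  then obtain c' where c: "c = 2 ^ j * c'" using pow_divides_pow_iff[of 2] by (auto elim: dvdE)
  have "(w * x)^2 + c^2 = (2 ^ j)^2 * ((w' * x)^2 + c'^2)"
    unfolding w(1) c by (simp add: power_mult_distrib algebra_simps)
  moreover have "(2::int) ^ (2 * j + 2) = (2 ^ j)^2 * 4"
    by (simp add: power_add power_mult[symmetric] mult.commute)
  ultimately have "(2 ^ j)^2 * 4 dvd (2 ^ j)^2 * ((w' * x)^2 + c'^2)"
    using dvd by simp
  then have "4 dvd (w' * x)^2 + c'^2" by simp
  moreover have "odd (w' * x)" using w(2) assms(2) by simp
  ultimately show False using four_not_dvd_odd_square_add_square by blast
qed

lemma coprime_sum_squares_not_dvd_pow_2: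
  fixes u w x y :: int
  assumes "u \<noteq> 0" "w \<noteq> 0" "coprime x y"
  shows "\<not> 2 ^ (2 * (multiplicity 2 u + multiplicity 2 w) + 2) dvd (w * x)^2 + (u * y)^2"
    (is "\<not> ?N dvd _")
proof
  assume dvd: "?N dvd (w * x)^2 + (u * y)^2"
  have "odd x \<or> odd y"
  proof (rule ccontr)
    assume "\<not> (odd x \<or> odd y)"
    then have "is_unit (2::int)" using coprime_common_divisor[OF assms(3)] by blast
    then show False by simp
  qed
  then show False
  proof
    assume "odd x"
    have "2 ^ (2 * multiplicity 2 w + 2) dvd ?N" by (simp add: le_imp_power_dvd)
    with dvd have "2 ^ (2 * multiplicity 2 w + 2) dvd (w * x)^2 + (u * y)^2" by (rule dvd_trans[rotated])
    with not_dvd_sum_squares_multiplicity_2[OF assms(2) \<open>odd x\<close>] show False by blast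
  next
    assume "odd y"
    have "2 ^ (2 * multiplicity 2 u + 2) dvd ?N" by (simp add: le_imp_power_dvd)
    with dvd have "2 ^ (2 * multiplicity 2 u + 2) dvd (w * x)^2 + (u * y)^2" by (rule dvd_trans[rotated])
    then have "2 ^ (2 * multiplicity 2 u + 2) dvd (u * y)^2 + (w * x)^2" by (simp only: add.commute)
    with not_dvd_sum_squares_multiplicity_2[OF assms(1) \<open>odd y\<close>] show False by blast
  qed
qed

lemma abs_eq_square_if_even_multiplicity:
  fixes a :: int
  assumes "\<And>l. prime l \<Longrightarrow> even (multiplicity l a)"
  obtains u where "\<bar>a\<bar> = u^2"
proof -
  have "is_nth_power 2 (normalize a)"
    using is_nth_power_conv_multiplicity[of 2 a] assms by simp
  then show ?thesis using that by (auto elim: is_nth_powerE)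
qed

lemma same_sign_if_solvable_mod_powers_of_2:
  fixes a b u w :: int
  assumes a: "\<bar>a\<bar> = u^2" "a \<noteq> 0" and b: "\<bar>b\<bar> = w^2" "b \<noteq> 0"
    and solvable: "\<And>K. \<exists>x y. coprime x y \<and> 2 ^ K dvd b * x^2 - a * y^2"
  shows "sgn a = sgn b"
proof (rule ccontr)
  assume sgn: "sgn a \<noteq> sgn b"
  obtain x y where xy: "coprime x y"
    "2 ^ (2 * (multiplicity 2 u + multiplicity 2 w) + 2) dvd b * x^2 - a * y^2"
    using solvable by blast
  have "sgn a = - sgn b" using sgn a(2) b(2) by (auto simp: sgn_if split: if_splits)
  then have "a = - sgn b * u^2" "b = sgn b * w^2"
    using sgn_mult_abs[of a] sgn_mult_abs[of b] a(1) b(1) by simp_all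
  then have "b * x^2 - a * y^2 = sgn b * ((w * x)^2 + (u * y)^2)"
    by (simp add: power_mult_distrib algebra_simps)
  then have "\<bar>b * x^2 - a * y^2\<bar> = (w * x)^2 + (u * y)^2"
    using b(2) by (simp add: abs_mult)
  then have "2 ^ (2 * (multiplicity 2 u + multiplicity 2 w) + 2) dvd (w * x)^2 + (u * y)^2"
    using xy(2) dvd_abs_iff by metis
  moreover have "u \<noteq> 0" "w \<noteq> 0" using a b by auto
  ultimately show False using coprime_sum_squares_not_dvd_pow_2 xy(1) by blast
qed

lemma solvable_mod_prime_powers_cancel:
  fixes l t a b :: int
  assumes "prime l" "t \<noteq> 0"
    and "\<And>K. \<exists>x y. coprime x y \<and> l ^ K dvd t * (b * x^2 - a * y^2)"
  shows "\<exists>x y. coprime x y \<and> l ^ K dvd b * x^2 - a * y^2"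
  using assms(3)[of "K + multiplicity l t"] prime_power_dvd_mult_cancel[OF assms(1,2)] by blast

lemma even_multiplicity_if_solvable_mod_prime_powers:
  fixes l a b :: int
  assumes l: "prime l" and "a \<noteq> 0" "b \<noteq> 0" "coprime a b"
    and solvable: "\<And>K. \<exists>x y. coprime x y \<and> l ^ K dvd b * x^2 - a * y^2"
  shows "even (multiplicity l a)" "even (multiplicity l b)"
proof -
  show "even (multiplicity l a)"
    using solvable[of "multiplicity l a + 1"]
      even_multiplicity_if_dvd_diff_squares[OF l \<open>a \<noteq> 0\<close> \<open>coprime a b\<close>] by blast
  obtain x y where "coprime y x" "l ^ (multiplicity l b + 1) dvd a * y^2 - b * x^2"
    using solvable[of "multiplicity l b + 1"] dvd_diff_commute coprime_commute by blast
  moreover have "coprime b a" using \<open>coprime a b\<close> by (simp add: coprime_commute)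
  ultimately show "even (multiplicity l b)"
    using even_multiplicity_if_dvd_diff_squares[OF l \<open>b \<noteq> 0\<close>] by blast
qed

lemma eq_mult_coprime_squares_if_locally_solvable:
  fixes a b t :: int
  assumes "a \<noteq> 0" "b \<noteq> 0" "t \<noteq> 0"
    and solvable: "\<And>l K. prime l \<Longrightarrow> \<exists>x y. coprime x y \<and> l ^ K dvd t * (b * x^2 - a * y^2)"
  obtains c u w where "coprime u w" "a = c * u^2" "b = c * w^2"
proof -
  define g where "g = gcd a b"
  have "g \<noteq> 0" using assms(1) by (simp add: g_def)
  obtain a' b' where ab: "a = a' * g" "b = b' * g" and "coprime a' b'"
    using gcd_coprime_exists[OF \<open>g \<noteq> 0\<close>[unfolded g_def]] unfolding g_def by blast
  have "a' \<noteq> 0" "b' \<noteq> 0" using assms(1,2) ab by auto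
  have solvable': "\<exists>x y. coprime x y \<and> l ^ K dvd b' * x^2 - a' * y^2" if l: "prime l" for l K
  proof (rule solvable_mod_prime_powers_cancel[OF l])
    show "t * g \<noteq> 0" using \<open>t \<noteq> 0\<close> \<open>g \<noteq> 0\<close> by simp
    have "t * (b * x^2 - a * y^2) = (t * g) * (b' * x^2 - a' * y^2)" for x y :: int
      unfolding ab by (simp add: algebra_simps)
    then show "\<exists>x y. coprime x y \<and> l ^ K dvd (t * g) * (b' * x^2 - a' * y^2)" for K
      using solvable[OF l, of K] by metis
  qed
  note even = even_multiplicity_if_solvable_mod_prime_powers[OF _ \<open>a' \<noteq> 0\<close> \<open>b' \<noteq> 0\<close> \<open>coprime a' b'\<close> solvable']
  obtain u where u: "\<bar>a'\<bar> = u^2" using even(1) by (rule abs_eq_square_if_even_multiplicity)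
  obtain w where w: "\<bar>b'\<bar> = w^2" using even(2) by (rule abs_eq_square_if_even_multiplicity)
  have "coprime \<bar>a'\<bar> \<bar>b'\<bar>" using \<open>coprime a' b'\<close> by simp
  then have "coprime u w" unfolding u w by simp
  moreover have "sgn a' = sgn b'"
    using same_sign_if_solvable_mod_powers_of_2[OF u \<open>a' \<noteq> 0\<close> w \<open>b' \<noteq> 0\<close>] solvable'[of 2] by simp
  then obtain s where "a' = s * u^2" "b' = s * w^2"
    using sgn_mult_abs[of a'] sgn_mult_abs[of b'] unfolding u w by metis
  then have "a = (g * s) * u^2" "b = (g * s) * w^2" unfolding ab by simp_all
  ultimately show ?thesis using that by blast
qed

lemma power_Suc_dvd_mult_cancel:
  fixes l n z :: "'a :: idom"
  assumes "l ^ (k + 1) dvd n" "n dvd l ^ k * z" "l \<noteq> 0"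
  shows "l dvd z"
proof -
  have "l ^ k * l dvd l ^ k * z" using dvd_trans[OF assms(1,2)] by (simp add: mult.commute)
  then show ?thesis using assms(3) by simp
qed

section \<open>Torsion and square relations in abelian groups\<close>

lemma (in group) int_pow_eq_one_imp_torsion:
  assumes "g \<in> carrier G" "g [^] (k::int) = \<one>" "k \<noteq> 0"
  shows "g \<in> torsion G"
proof -
  have "int (ord g) dvd k" using assms(1,2) int_pow_eq_id by blast
  then have "ord g dvd nat \<bar>k\<bar>" by (simp add: dvd_nat_abs_iff)
  then have "g [^] nat \<bar>k\<bar> = \<one>" using pow_eq_id[OF assms(1)] by blast
  moreover have "nat \<bar>k\<bar> > 0" using assms(3) by simp
  ultimately show ?thesis unfolding torsion_def using assms(1) by blast
qed

lemma (in group) nat_pow_torsion: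
  assumes "T \<in> torsion G"
  shows "T [^] (k::nat) \<in> torsion G"
proof -
  obtain n :: nat where n: "T \<in> carrier G" "n > 0" "T [^] n = \<one>"
    using assms unfolding torsion_def by blast
  have "(T [^] k) [^] n = T [^] (n * k)" using n(1) by (simp add: nat_pow_pow mult.commute)
  also have "\<dots> = (T [^] n) [^] k" using n(1) by (simp add: nat_pow_pow)
  also have "\<dots> = \<one>" using n(3) by simp
  finally have "(T [^] k) [^] n = \<one>" .
  with n show ?thesis unfolding torsion_def by auto
qed

lemma torsion_pow_order_eq_one:
  assumes G: "group G" and H: "group H" and h: "h \<in> hom G H"
    and inj: "inj_on h (torsion G)" and T: "T \<in> torsion G"
  shows "T [^]\<^bsub>G\<^esub> order H = \<one>\<^bsub>G\<^esub>"
proof -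
  interpret h: group_hom G H h using G H h by (simp add: group_hom_def group_hom_axioms_def)
  have T_carrier: "T \<in> carrier G" using T unfolding torsion_def by blast
  have "h (T [^]\<^bsub>G\<^esub> order H) = h \<one>\<^bsub>G\<^esub>"
    using T_carrier by (simp add: h.hom_nat_pow group.pow_order_eq_1[OF H])
  moreover have "T [^]\<^bsub>G\<^esub> order H \<in> torsion G" using T by (rule h.G.nat_pow_torsion)
  moreover have "\<one>\<^bsub>G\<^esub> \<in> torsion G" unfolding torsion_def by force
  ultimately show ?thesis using inj_onD[OF inj] by blast
qed

lemma torsion_exponent_if_assumption_A2:
  fixes B :: "('b, 'm) monoid_scheme" and r :: "'v \<Rightarrow> 'b \<Rightarrow> 'c"
  assumes "group B" "\<And>v. group (Bv v)" "\<And>v. finite (carrier (Bv v))" "\<And>v. r v \<in> hom B (Bv v)"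
    and "infinite (UNIV :: 'v set)" "assumption_A2 B r"
  obtains N :: nat where "N > 0" "\<And>T. T \<in> torsion B \<Longrightarrow> T [^]\<^bsub>B\<^esub> N = \<one>\<^bsub>B\<^esub>"
proof -
  obtain v0 where "inj_on (r v0) (torsion B)"
    using assms(5,6) unfolding assumption_A2_def by (metis (mono_tags) ex_new_if_finite mem_Collect_eq)
  moreover have "order (Bv v0) > 0"
    using assms(3) monoid.order_gt_0_iff_finite[OF group.is_monoid[OF assms(2)]] by blast
  ultimately show ?thesis
    using that[of "order (Bv v0)"] torsion_pow_order_eq_one[OF assms(1,2,4)] by blast
qed

lemma exact_pow_condE:
  assumes "exact_pow_cond l k n" "k > 0"
  obtains n' where "n = l ^ k * n'" "\<not> l dvd n'"
proof -
  from assms have dvd: "l ^ k dvd n" and not_dvd: "\<not> l ^ (k + 1) dvd n"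
    by (auto simp: exact_pow_cond_def)
  then obtain n' where n: "n = l ^ k * n'" by blast
  moreover have "\<not> l dvd n'"
    using not_dvd unfolding n by (auto simp: mult.commute)
  ultimately show ?thesis using that by blast
qed

definition square_relation :: "('a, 'm) monoid_scheme \<Rightarrow> int \<Rightarrow> 'a \<Rightarrow> 'a \<Rightarrow> bool" where
  "square_relation G t p q \<longleftrightarrow>
     (\<exists>x y :: int. coprime x y \<and> p [^]\<^bsub>G\<^esub> (t * x^2) \<otimes>\<^bsub>G\<^esub> q [^]\<^bsub>G\<^esub> (t * y^2) = \<one>\<^bsub>G\<^esub>)"

context comm_group
begin

lemma pow_mult_int_pow:
  assumes "p \<in> carrier G" "q \<in> carrier G"
  shows "(p [^] (a::int) \<otimes> q [^] (b::int)) [^] (c::int) = p [^] (a * c) \<otimes> q [^] (b * c)"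
  using assms by (simp add: int_pow_mult_distrib m_comm int_pow_pow)

lemma ord_dvd_if_square_relation:
  assumes p: "p \<in> carrier G" and q: "q \<in> carrier G"
    and rel: "p [^] (a::int) \<otimes> q [^] (b::int) = \<one>" and "square_relation G t p q"
  obtains x y where "coprime x y" "int (ord p) dvd t * (b * x^2 - a * y^2)"
proof -
  obtain x y where "coprime x y" and sq: "p [^] (t * x^2) \<otimes> q [^] (t * y^2) = \<one>"
    using assms(4) unfolding square_relation_def by blast
  have "q [^] b \<otimes> p [^] a = \<one>" using rel p q by (simp add: m_comm)
  then have "q [^] b = p [^] (- a)"
    using p q by (simp add: int_pow_neg inv_equality)
  then have "q [^] (t * y^2 * b) = p [^] (- a * (t * y^2))"
    using p q int_pow_pow[of q b "t * y^2"] int_pow_pow[of p "- a" "t * y^2"] by (simp add: mult.commute)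
  moreover have "p [^] (t * x^2 * b) \<otimes> q [^] (t * y^2 * b) = \<one>"
    using pow_mult_int_pow[OF p q, of "t * x^2" "t * y^2" b] sq by simp
  moreover have "t * (b * x^2 - a * y^2) = t * x^2 * b + - a * (t * y^2)"
    by (simp add: algebra_simps)
  ultimately have "p [^] (t * (b * x^2 - a * y^2)) = \<one>"
    using int_pow_mult[OF p] by metis
  then show ?thesis using that \<open>coprime x y\<close> int_pow_eq_id[OF p] by blast
qed

lemma not_square_relation_if_exact_2_orders:
  assumes p: "p \<in> carrier G" and q: "q \<in> carrier G"
    and t: "t = 2 ^ e * t'" "odd t'"
    and ord_p: "exact_pow_cond 2 (e + 2) (ord p)"
    and ord_q: "exact_pow_cond 2 (e + 1) (ord q)"
  shows "\<not> square_relation G t p q"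
proof
  assume "square_relation G t p q"
  then obtain x y where "coprime x y" and rel: "p [^] (t * x^2) \<otimes> q [^] (t * y^2) = \<one>"
    unfolding square_relation_def by blast
  obtain n' where n: "ord p = 2 ^ (e + 2) * n'" "odd n'" using exact_pow_condE[OF ord_p] by auto
  obtain m' where m: "ord q = 2 ^ (e + 1) * m'" "odd m'" using exact_pow_condE[OF ord_q] by auto
  have rel_pow: "p [^] (t * x^2 * E) = \<one> \<longleftrightarrow> q [^] (t * y^2 * E) = \<one>" for E :: int
  proof -
    have "p [^] (t * x^2 * E) \<otimes> q [^] (t * y^2 * E) = \<one>"
      using pow_mult_int_pow[OF p q, of "t * x^2" "t * y^2" E] rel by simp
    then show ?thesis using p q by auto
  qed
  txt \<open>Raising the relation to a suitable power kills the term of one point; the exact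
    powers of 2 in the two orders then contradict each other.\<close>
  show False
  proof (cases "odd x")
    case True
    have "int (ord q) dvd t * y^2 * (2 * int m')"
      unfolding t(1) m(1) by (simp add: algebra_simps)
    then have "int (ord p) dvd t * x^2 * (2 * int m')"
      using rel_pow int_pow_eq_id[OF p] int_pow_eq_id[OF q] by blast
    also have "t * x^2 * (2 * int m') = 2 ^ (e + 1) * (t' * x^2 * int m')"
      unfolding t(1) by (simp add: algebra_simps)
    finally have "2 dvd t' * x^2 * int m'"
      by (rule power_Suc_dvd_mult_cancel[rotated]) (simp_all add: n(1))
    then show False using True t(2) m(2) by simp
  next
    case False
    then have "even x" "odd y" using \<open>coprime x y\<close> coprime_common_divisor[of x y 2] by auto
    have "int (ord p) dvd t * x^2 * int n'"
      using \<open>even x\<close> unfolding t(1) n(1) by (auto simp: algebra_simps power2_eq_square elim!: evenE)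
    then have "int (ord q) dvd t * y^2 * int n'"
      using rel_pow int_pow_eq_id[OF p] int_pow_eq_id[OF q] by blast
    also have "t * y^2 * int n' = 2 ^ e * (t' * y^2 * int n')"
      unfolding t(1) by (simp add: algebra_simps)
    finally have "2 dvd t' * y^2 * int n'"
      by (rule power_Suc_dvd_mult_cancel[rotated]) (simp_all add: m(1))
    then show False using \<open>odd y\<close> t(2) n(2) by simp
  qed
qed

lemma torsion_if_scaled_squares_relation:
  assumes "P \<in> carrier G" "Q \<in> carrier G"
    and "P [^] (c * u^2) \<otimes> Q [^] (c * w^2) = \<one>" "(c::int) \<noteq> 0"
  shows "P [^] (u^2) \<otimes> Q [^] (w^2) \<in> torsion G"
proof (rule int_pow_eq_one_imp_torsion)
  show "(P [^] (u^2) \<otimes> Q [^] (w^2)) [^] c = \<one>"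
    using assms pow_mult_int_pow[of P Q "u^2" "w^2" c] by (simp add: mult.commute)
qed (use assms in auto)

lemma lin_indep_Z_pair_iff:
  assumes "P \<in> carrier G" "Q \<in> carrier G"
  shows "lin_indep_Z G (\<lambda>i. if i = 0 then P else Q) 2 \<longleftrightarrow>
    (\<forall>(a::int) (b::int). P [^] a \<otimes> Q [^] b = \<one> \<longrightarrow> a = 0 \<and> b = 0)"
proof -
  have pair: "finprod G (\<lambda>i. (if i = 0 then P else Q) [^] c i) {..<2} = P [^] c 0 \<otimes> Q [^] c 1"
    for c :: "nat \<Rightarrow> int"
  proof -
    have "{..<2::nat} = {0, 1}" by auto
    then show ?thesis using assms by (simp add: m_comm)
  qed
  show ?thesis
  proof
    assume "lin_indep_Z G (\<lambda>i. if i = 0 then P else Q) 2"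
    then have coeffs_zero:
      "\<And>c :: nat \<Rightarrow> int. finprod G (\<lambda>i. (if i = 0 then P else Q) [^] c i) {..<2} = \<one> \<Longrightarrow> \<forall>i<2. c i = 0"
      unfolding lin_indep_Z_def by blast
    show "\<forall>(a::int) (b::int). P [^] a \<otimes> Q [^] b = \<one> \<longrightarrow> a = 0 \<and> b = 0"
    proof (intro allI impI)
      fix a b :: int
      assume "P [^] a \<otimes> Q [^] b = \<one>"
      then have "finprod G (\<lambda>i. (if i = 0 then P else Q) [^] (if i = 0 then a else b)) {..<2::nat} = \<one>"
        using pair[of "\<lambda>i. if i = 0 then a else b"] by simp
      then have "\<forall>i<2::nat. (if i = 0 then a else b) = 0"
        by (rule coeffs_zero)
      from this[rule_format, of 0] this[rule_format, of 1] show "a = 0 \<and> b = 0" by simp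
    qed
  next
    assume rel: "\<forall>(a::int) (b::int). P [^] a \<otimes> Q [^] b = \<one> \<longrightarrow> a = 0 \<and> b = 0"
    show "lin_indep_Z G (\<lambda>i. if i = 0 then P else Q) 2"
      unfolding lin_indep_Z_def
    proof (intro conjI allI impI)
      fix c :: "nat \<Rightarrow> int" and i :: nat
      assume "finprod G (\<lambda>i. (if i = 0 then P else Q) [^] c i) {..<2} = \<one>" "i < 2"
      then have "c 0 = 0" "c 1 = 0" using rel pair[of c] by simp_all
      with \<open>i < 2\<close> show "c i = 0" using less_2_cases by fastforce
    qed (use assms in simp)
  qed
qed

lemma lin_indep_Z_single:
  assumes "P \<in> carrier G" "P \<notin> torsion G"
  shows "lin_indep_Z G (\<lambda>_. P) 1"
  unfolding lin_indep_Z_def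
proof (intro conjI allI impI)
  fix c :: "nat \<Rightarrow> int" and i :: nat
  assume "finprod G (\<lambda>i. P [^] c i) {..<1} = \<one>" "i < 1"
  moreover have "{..<1::nat} = {0}" by auto
  ultimately have "P [^] c 0 = \<one>" "i = 0" using assms(1) by (simp_all add: Pi_def)
  then show "c i = 0" using int_pow_eq_one_imp_torsion assms by blast
qed (use assms in simp)

lemma nonzero_relation_if_not_lin_indep_Z:
  assumes "P \<in> carrier G" "Q \<in> carrier G" "P \<notin> torsion G" "Q \<notin> torsion G"
    and "\<not> lin_indep_Z G (\<lambda>i. if i = 0 then P else Q) 2"
  obtains a b :: int where "a \<noteq> 0" "b \<noteq> 0" "P [^] a \<otimes> Q [^] b = \<one>"
proof -
  obtain a b :: int where rel: "P [^] a \<otimes> Q [^] b = \<one>" and "a \<noteq> 0 \<or> b \<noteq> 0"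
    using assms(5) lin_indep_Z_pair_iff[OF assms(1,2)] by blast
  moreover have "a \<noteq> 0"
  proof
    assume "a = 0"
    then have "Q [^] b = \<one>" "b \<noteq> 0" using rel assms(1,2) calculation(2) by simp_all
    then show False using int_pow_eq_one_imp_torsion assms(2,4) by blast
  qed
  moreover have "b \<noteq> 0"
  proof
    assume "b = 0"
    then have "P [^] a = \<one>" using rel assms(1,2) by simp
    then show False using int_pow_eq_one_imp_torsion assms(1,3) \<open>a \<noteq> 0\<close> by blast
  qed
  ultimately show ?thesis using that by blast
qed

end

lemma square_relation_of_hom_image:
  assumes G: "comm_group G" and H: "comm_group H" and h: "h \<in> hom G H"
    and carrier: "P \<in> carrier G" "Q \<in> carrier G" "T \<in> carrier G"
    and T: "T [^]\<^bsub>G\<^esub> N = \<one>\<^bsub>G\<^esub>" and "coprime (x::int) y"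
    and img: "h (P [^]\<^bsub>G\<^esub> (x^2) \<otimes>\<^bsub>G\<^esub> Q [^]\<^bsub>G\<^esub> (y^2)) = h T"
  shows "square_relation H (int N) (h P) (h Q)"
proof -
  interpret G: comm_group G by (rule G)
  interpret H: comm_group H by (rule H)
  interpret h: group_hom G H h using h by (simp add: group_hom_def group_hom_axioms_def)
  have "(h P [^]\<^bsub>H\<^esub> (x^2) \<otimes>\<^bsub>H\<^esub> h Q [^]\<^bsub>H\<^esub> (y^2)) [^]\<^bsub>H\<^esub> (int N) = h (T [^]\<^bsub>G\<^esub> N)"
    using img carrier by (simp add: h.hom_int_pow h.hom_nat_pow int_pow_int)
  also have "\<dots> = \<one>\<^bsub>H\<^esub>" using T by simp
  finally show ?thesis
    using \<open>coprime x y\<close> carrier H.pow_mult_int_pow[of "h P" "h Q" "x^2" "y^2" "int N"]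
    unfolding square_relation_def by (auto simp: mult.commute)
qed

section \<open>Sets of primes of positive density\<close>

lemma filterlim_card_norm_le_at_top:
  fixes Nv :: "'v \<Rightarrow> nat"
  assumes inf: "infinite (UNIV :: 'v set)" and fin: "\<And>x. finite {v. Nv v \<le> x}"
  shows "filterlim (\<lambda>x. real (card {v. Nv v \<le> x})) at_top sequentially"
  unfolding filterlim_at_top
proof
  fix Z :: real
  obtain F :: "'v set" where F: "finite F" "card F = nat \<lceil>Z\<rceil>"
    using infinite_arbitrarily_large[OF inf] by blast
  have "eventually (\<lambda>x. (\<Sum>v\<in>F. Nv v) \<le> x) sequentially" by (rule eventually_ge_at_top)
  then show "eventually (\<lambda>x. Z \<le> real (card {v. Nv v \<le> x})) sequentially"
  proof eventually_elim
    case (elim x)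
    then have "F \<subseteq> {v. Nv v \<le> x}" using F(1) member_le_sum[of _ F Nv] by fastforce
    then have "card F \<le> card {v. Nv v \<le> x}" using fin by (rule card_mono[rotated])
    then show ?case using F(2) by linarith
  qed
qed

lemma has_pos_density_infinite:
  fixes Nv :: "'v \<Rightarrow> nat"
  assumes "infinite (UNIV :: 'v set)" "\<And>x. finite {v. Nv v \<le> x}" "has_pos_density Nv S"
  shows "infinite S"
proof
  assume "finite S"
  define ratio where "ratio x = real (card {v \<in> S. Nv v \<le> x}) / real (card {v. Nv v \<le> x})" for x
  obtain d where "d > 0" and lim: "ratio \<longlonglongrightarrow> d"
    using assms(3) unfolding has_pos_density_def ratio_def by blast
  have bound_lim: "(\<lambda>x. real (card S) / real (card {v. Nv v \<le> x})) \<longlonglongrightarrow> 0"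
    using filterlim_card_norm_le_at_top[OF assms(1,2)]
    by (intro tendsto_divide_0[OF tendsto_const] filterlim_at_top_imp_at_infinity)
  have "ratio x \<le> real (card S) / real (card {v. Nv v \<le> x})" for x
  proof -
    have "card {v \<in> S. Nv v \<le> x} \<le> card S" using \<open>finite S\<close> by (rule card_mono) auto
    then show ?thesis unfolding ratio_def by (simp add: divide_right_mono)
  qed
  then have "ratio \<longlonglongrightarrow> 0"
    by (intro tendsto_sandwich[OF _ _ tendsto_const bound_lim]) (simp_all add: ratio_def)
  with lim have "d = 0" by (rule LIMSEQ_unique)
  with \<open>d > 0\<close> show False by simp
qed

section \<open>Applying the reduction maps\<close>

lemma not_lin_indep_Z_if_dense_square_relations:
  assumes Bv: "\<And>v. comm_group (Bv v)" and A1: "assumption_A1 B Bv r Nv" and "t \<noteq> 0"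
    and rP: "\<And>v. r v P \<in> carrier (Bv v)" and rQ: "\<And>v. r v Q \<in> carrier (Bv v)"
    and dense: "\<And>S. has_pos_density Nv S \<Longrightarrow> \<exists>v\<in>S. square_relation (Bv v) t (r v P) (r v Q)"
  shows "\<not> lin_indep_Z B (\<lambda>i. if i = 0 then P else Q) 2"
proof
  assume indep: "lin_indep_Z B (\<lambda>i. if i = 0 then P else Q) 2"
  define e where "e = multiplicity 2 t"
  obtain t' where t: "t = 2 ^ e * t'" "odd t'"
    using multiplicity_decompose'[of t 2] \<open>t \<noteq> 0\<close> unfolding e_def by auto
  obtain S where "has_pos_density Nv S" and exact: "\<forall>v\<in>S. \<forall>i<2::nat.
      exact_pow_cond 2 (if i = 0 then e + 2 else e + 1) (group.ord (Bv v) (r v (if i = 0 then P else Q)))"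
    using A1[unfolded assumption_A1_def, rule_format, OF two_is_prime_nat indep,
        where k = "\<lambda>i. if i = 0 then e + 2 else e + 1"] by auto
  then obtain v where "v \<in> S" and rel: "square_relation (Bv v) t (r v P) (r v Q)"
    using dense by blast
  from exact \<open>v \<in> S\<close> have "exact_pow_cond 2 (e + 2) (group.ord (Bv v) (r v P))"
    and "exact_pow_cond 2 (e + 1) (group.ord (Bv v) (r v Q))"
    by (force dest: bspec spec[of _ 0] spec[of _ 1])+
  with rel show False
    using comm_group.not_square_relation_if_exact_2_orders[OF Bv rP rQ t] by blast
qed

lemma locally_solvable_if_dense_square_relations:
  assumes B: "comm_group B" and Bv: "\<And>v. comm_group (Bv v)" and r: "\<And>v. r v \<in> hom B (Bv v)"
    and A1: "assumption_A1 B Bv r Nv"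
    and P: "P \<in> carrier B" "P \<notin> torsion B" and Q: "Q \<in> carrier B"
    and rel: "P [^]\<^bsub>B\<^esub> a \<otimes>\<^bsub>B\<^esub> Q [^]\<^bsub>B\<^esub> b = \<one>\<^bsub>B\<^esub>"
    and dense: "\<And>S. has_pos_density Nv S \<Longrightarrow> \<exists>v\<in>S. square_relation (Bv v) t (r v P) (r v Q)"
    and l: "prime (l::int)"
  shows "\<exists>x y. coprime x y \<and> l ^ K dvd t * (b * x^2 - a * y^2)"
proof -
  have "prime (nat l)" using l by simp
  obtain S where "has_pos_density Nv S"
    and exact: "\<forall>v\<in>S. \<forall>i<1::nat. exact_pow_cond (nat l) K (group.ord (Bv v) (r v P))"
    using A1[unfolded assumption_A1_def, rule_format, OF \<open>prime (nat l)\<close>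
        comm_group.lin_indep_Z_single[OF B P], where k = "\<lambda>_. K"] by auto
  then obtain v where "v \<in> S" and sq: "square_relation (Bv v) t (r v P) (r v Q)"
    using dense by blast
  interpret Bv: comm_group "Bv v" by (rule Bv)
  interpret h: group_hom B "Bv v" "r v"
    using r B Bv.is_group by (simp add: group_hom_def group_hom_axioms_def comm_group.axioms(2))
  have "nat l ^ K dvd Bv.ord (r v P)"
    using exact \<open>v \<in> S\<close> by (cases "K = 0") (auto simp: exact_pow_cond_def)
  then have "int (nat l ^ K) dvd int (Bv.ord (r v P))" by (simp only: of_nat_dvd_iff)
  then have l_dvd: "l ^ K dvd int (Bv.ord (r v P))" using prime_ge_0_int[OF l] by simp
  have rel_v: "r v P [^]\<^bsub>Bv v\<^esub> a \<otimes>\<^bsub>Bv v\<^esub> r v Q [^]\<^bsub>Bv v\<^esub> b = \<one>\<^bsub>Bv v\<^esub>"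
  proof -
    have "r v (P [^]\<^bsub>B\<^esub> a \<otimes>\<^bsub>B\<^esub> Q [^]\<^bsub>B\<^esub> b) = \<one>\<^bsub>Bv v\<^esub>" using rel by simp
    then show ?thesis using P(1) Q by (simp add: h.hom_int_pow)
  qed
  obtain x y where "coprime x y" "int (Bv.ord (r v P)) dvd t * (b * x^2 - a * y^2)"
    using Bv.ord_dvd_if_square_relation[OF h.hom_closed[OF P(1)] h.hom_closed[OF Q] rel_v sq] .
  with l_dvd show ?thesis using dvd_trans by blast
qed

lemma dense_square_relations_if_cofinite:
  fixes B :: "('b, 'm) monoid_scheme" and Bv :: "'v \<Rightarrow> ('c, 'n) monoid_scheme"
  assumes B: "comm_group B" and Bv: "\<And>v. comm_group (Bv v)" and r: "\<And>v. r v \<in> hom B (Bv v)"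
    and "infinite (UNIV :: 'v set)" "\<And>x. finite {v. Nv v \<le> x}"
    and P: "P \<in> carrier B" and Q: "Q \<in> carrier B"
    and N: "\<And>T. T \<in> torsion B \<Longrightarrow> T [^]\<^bsub>B\<^esub> N = \<one>\<^bsub>B\<^esub>"
    and fin: "finite {v. \<not> (\<exists>x y :: int. coprime x y \<and> (\<exists>T \<in> torsion B.
              r v (P [^]\<^bsub>B\<^esub> (x ^ 2) \<otimes>\<^bsub>B\<^esub> Q [^]\<^bsub>B\<^esub> (y ^ 2)) = r v T))}"
      (is "finite ?Bad")
    and S: "has_pos_density Nv S"
  shows "\<exists>v\<in>S. square_relation (Bv v) (int N) (r v P) (r v Q)"
proof -
  have "infinite S" using has_pos_density_infinite[OF assms(4,5) S] .
  then obtain v where "v \<in> S" "v \<notin> ?Bad" using fin by (meson finite_subset subsetI)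
  then obtain x y :: int and T where xy: "coprime x y" and T: "T \<in> torsion B"
    and img: "r v (P [^]\<^bsub>B\<^esub> (x ^ 2) \<otimes>\<^bsub>B\<^esub> Q [^]\<^bsub>B\<^esub> (y ^ 2)) = r v T"
    by blast
  moreover have "T \<in> carrier B" using T by (simp add: torsion_def)
  then show ?thesis
    using square_relation_of_hom_image[OF B Bv r P Q _ N[OF T] xy img] \<open>v \<in> S\<close> by blast
qed

theorem theorem2p1:
  fixes B :: "('b, 'm) monoid_scheme"
    and Bv :: "'v \<Rightarrow> ('c, 'n) monoid_scheme"
    and r :: "'v \<Rightarrow> 'b \<Rightarrow> 'c"
    and Nv :: "'v \<Rightarrow> nat"
    and P Q :: 'b
  assumes B_grp: "comm_group B"
    and Bv_grp: "\<And>v. comm_group (Bv v)"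
    and Bv_fin: "\<And>v. finite (carrier (Bv v))"
    and r_hom: "\<And>v. r v \<in> hom B (Bv v)"
    and primes_inf: "infinite (UNIV :: 'v set)"
    and norm_fin: "\<And>x. finite {v. Nv v \<le> x}"
    and A1: "assumption_A1 B Bv r Nv"
    and A2: "assumption_A2 B r"
    and P: "P \<in> carrier B" "P \<notin> torsion B"
    and Q: "Q \<in> carrier B" "Q \<notin> torsion B"
  shows "finite {v. \<not> (\<exists>x y :: int. coprime x y \<and> (\<exists>T \<in> torsion B.
              r v (P [^]\<^bsub>B\<^esub> (x ^ 2) \<otimes>\<^bsub>B\<^esub> Q [^]\<^bsub>B\<^esub> (y ^ 2)) = r v T))}
     \<longleftrightarrow> (\<exists>x y :: int. coprime x y \<and> (\<exists>T \<in> torsion B.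
              P [^]\<^bsub>B\<^esub> (x ^ 2) \<otimes>\<^bsub>B\<^esub> Q [^]\<^bsub>B\<^esub> (y ^ 2) = T))"
  (is "finite ?Bad \<longleftrightarrow> ?global")
proof
  assume ?global
  then have "?Bad = {}" by blast
  then show "finite ?Bad" by simp
next
  assume fin: "finite ?Bad"
  interpret B: comm_group B by (rule B_grp)
  have rP: "r v P \<in> carrier (Bv v)" and rQ: "r v Q \<in> carrier (Bv v)" for v
    using r_hom P(1) Q(1) by (auto simp: hom_def)
  obtain N :: nat where "N > 0" and N: "\<And>T. T \<in> torsion B \<Longrightarrow> T [^]\<^bsub>B\<^esub> N = \<one>\<^bsub>B\<^esub>"
    using torsion_exponent_if_assumption_A2[OF B.is_group comm_group.axioms(2)[OF Bv_grp]
        Bv_fin r_hom primes_inf A2] by blast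
  then have "int N \<noteq> 0" by simp
  note dense = dense_square_relations_if_cofinite[OF B_grp Bv_grp r_hom primes_inf norm_fin P(1) Q(1) N fin]
  obtain a b :: int where "a \<noteq> 0" "b \<noteq> 0" and rel: "P [^]\<^bsub>B\<^esub> a \<otimes>\<^bsub>B\<^esub> Q [^]\<^bsub>B\<^esub> b = \<one>\<^bsub>B\<^esub>"
    using B.nonzero_relation_if_not_lin_indep_Z[OF P(1) Q(1) P(2) Q(2)]
      not_lin_indep_Z_if_dense_square_relations[OF Bv_grp A1 \<open>int N \<noteq> 0\<close> rP rQ dense] by blast
  obtain c u w where "coprime u w" "a = c * u^2" "b = c * w^2"
    by (rule eq_mult_coprime_squares_if_locally_solvable[OF \<open>a \<noteq> 0\<close> \<open>b \<noteq> 0\<close> \<open>int N \<noteq> 0\<close>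
          locally_solvable_if_dense_square_relations[OF B_grp Bv_grp r_hom A1 P Q(1) rel dense]])
  with rel \<open>a \<noteq> 0\<close> have "P [^]\<^bsub>B\<^esub> (u^2) \<otimes>\<^bsub>B\<^esub> Q [^]\<^bsub>B\<^esub> (w^2) \<in> torsion B"
    using B.torsion_if_scaled_squares_relation[OF P(1) Q(1)] by auto
  with \<open>coprime u w\<close> show ?global by blast
qed

end
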